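(* Let $R$ be an associative commutative ring with identity, $f=\frac{1}{1-X}\in R[[X]]$, and for $h\in R[[X]]$ let $\alpha[h]:g\mapsto h+g$ and $\mu[h]:g\mapsto hg$ be maps $R[[X]]\to R[[X]]$. Let $K$ be the group (under composition) generated by $\{\alpha[sf],\mu[f]\mid s\in R\}$ and let $L$ be the group generated by the maps $\{\,g\mapsto f\cdot(s+g)\mid s\in R\,\}$ (i.e. $\mu[f]\circ\alpha[s]$). Then $K=L$.
   Context: $R[[X]]$ is the ring of formal power series over $R$; $f=\sum_{k\ge0}X^k$ is invertible in $R[[X]]$, so all the listed maps are bijections of $R[[X]]$. *)

theory Defs
  imports "HOL-Algebra.Bij" "HOL-Algebra.Generated_Groups" "HOL-Computational_Algebra.Formal_Power_Series"
begin

text \<open>f = sum of X^k = 1/(1-X) in R[[X]]\<close>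
definition geom_fps :: "'a::comm_ring_1 fps" where
  "geom_fps = Abs_fps (\<lambda>_. 1)"

definition fps_add_map :: "'a::comm_ring_1 fps \<Rightarrow> 'a fps \<Rightarrow> 'a fps" where
  "fps_add_map h = (\<lambda>g. h + g)"

definition fps_mult_map :: "'a::comm_ring_1 fps \<Rightarrow> 'a fps \<Rightarrow> 'a fps" where
  "fps_mult_map h = (\<lambda>g. h * g)"

end

theory Submission
  imports Defs
begin

text \<open>Multiplication by \<open>f\<close> intertwines translations: \<open>\<mu>[f] \<circ> \<alpha>[s] = \<alpha>[s f] \<circ> \<mu>[f]\<close>. So the
  generators of \<open>L\<close> are the products \<open>a \<circ> \<mu>[f]\<close> with \<open>a\<close> running through the translations
  \<open>\<alpha>[s f]\<close>, and in any group \<open>A \<union> {g}\<close> and \<open>{a g | a \<in> A}\<close> generate the same subgroup as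
  soon as \<open>A\<close> contains the identity (here \<open>\<alpha>[0]\<close>).\<close>

lemma (in group) generate_insert_eq_generate_mult_right:
  assumes "A \<subseteq> carrier G" "g \<in> carrier G" "\<one> \<in> A"
  shows "generate G (insert g A) = generate G ((\<lambda>a. a \<otimes> g) ` A)"
proof -
  have translates_carrier: "(\<lambda>a. a \<otimes> g) ` A \<subseteq> carrier G"
    using assms by auto
  have "\<one> \<otimes> g \<in> (\<lambda>a. a \<otimes> g) ` A"
    using assms(3) by (rule imageI)
  then have g_in: "g \<in> generate G ((\<lambda>a. a \<otimes> g) ` A)"
    using assms(2) by (simp add: incl)
  have "a \<in> generate G ((\<lambda>a. a \<otimes> g) ` A)" if "a \<in> A" for a
  proof -
    have "a = (a \<otimes> g) \<otimes> inv g"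
      using that assms by (auto simp: m_assoc)
    then show ?thesis
      using that g_in translates_carrier by (metis eng incl imageI generate_m_inv_closed)
  qed
  then have "generate G (insert g A) \<subseteq> generate G ((\<lambda>a. a \<otimes> g) ` A)"
    using g_in translates_carrier by (intro generate_subgroup_incl generate_is_subgroup) auto
  moreover have "generate G ((\<lambda>a. a \<otimes> g) ` A) \<subseteq> generate G (insert g A)"
    using assms by (intro generate_subgroup_incl generate_is_subgroup) (auto intro: eng incl)
  ultimately show ?thesis
    by (rule subset_antisym)
qed

lemma Bij_UNIV: "Bij UNIV = {f. bij f}"
  by (simp add: Bij_def extensional_def)

lemma carrier_BijGroup_UNIV: "carrier (BijGroup UNIV) = {f. bij f}"
  by (simp add: BijGroup_def Bij_UNIV)

lemma one_BijGroup_UNIV: "\<one>\<^bsub>BijGroup UNIV\<^esub> = id"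
  by (simp add: BijGroup_def restrict_def id_def)

lemma mult_BijGroup_UNIV: "bij f \<Longrightarrow> bij g \<Longrightarrow> f \<otimes>\<^bsub>BijGroup UNIV\<^esub> g = f \<circ> g"
  by (simp add: BijGroup_def Bij_UNIV compose_def comp_def restrict_def)

lemma geom_fps_times_one_minus_X: "geom_fps * (1 - fps_X) = (1 :: 'a::comm_ring_1 fps)"
  by (rule fps_ext) (simp add: geom_fps_def algebra_simps)

lemma fps_add_map_0: "fps_add_map 0 = id"
  by (simp add: fps_add_map_def id_def)

lemma bij_fps_add_map: "bij (fps_add_map h)"
  unfolding fps_add_map_def by (rule o_bij[of "\<lambda>g. g - h"]) auto

lemma bij_fps_mult_map:
  assumes "h * k = 1"
  shows "bij (fps_mult_map h)"
  by (rule o_bij[of "fps_mult_map k"])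
    (simp_all add: fps_mult_map_def fun_eq_iff mult.assoc[symmetric] assms mult.commute[of k h])

lemma fps_mult_map_comp_add_map:
  "fps_mult_map h \<circ> fps_add_map g = fps_add_map (h * g) \<circ> fps_mult_map h"
  by (auto simp: fps_mult_map_def fps_add_map_def distrib_left)

theorem lemma8p1:
  "generate (BijGroup (UNIV :: 'a::comm_ring_1 fps set))
      ({fps_add_map (fps_const s * geom_fps) | s. True} \<union> {fps_mult_map geom_fps})
   = generate (BijGroup (UNIV :: 'a fps set))
      {fps_mult_map geom_fps \<circ> fps_add_map (fps_const s) | s. True}"
  (is "generate ?G (?A \<union> {?\<mu>}) = generate ?G ?L")
proof -
  interpret group ?G by (rule group_BijGroup)
  have bij_\<mu>: "bij ?\<mu>"
    using bij_fps_mult_map geom_fps_times_one_minus_X by blast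
  have "?\<mu> \<circ> fps_add_map (fps_const s) = fps_add_map (fps_const s * geom_fps) \<otimes>\<^bsub>?G\<^esub> ?\<mu>" for s
    using bij_\<mu> bij_fps_add_map
    by (subst mult_BijGroup_UNIV) (simp_all add: fps_mult_map_comp_add_map mult.commute)
  then have L_eq: "?L = (\<lambda>a. a \<otimes>\<^bsub>?G\<^esub> ?\<mu>) ` ?A"
    by auto
  have "\<one>\<^bsub>?G\<^esub> \<in> ?A"
    by (auto simp: one_BijGroup_UNIV fps_add_map_0 intro!: exI[of _ 0])
  then have "generate ?G (insert ?\<mu> ?A) = generate ?G ((\<lambda>a. a \<otimes>\<^bsub>?G\<^esub> ?\<mu>) ` ?A)"
    using bij_\<mu> bij_fps_add_map
    by (intro generate_insert_eq_generate_mult_right) (auto simp: carrier_BijGroup_UNIV)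
  then show ?thesis
    unfolding L_eq by simp
qed

end
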